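(* Let $a_1,\dots,a_p>0$ be pairwise distinct, $\vec n\in\mathbb N_0^p$, and $i$ with $n_i\ge1$. The type I multiple Charlier polynomials are $$C^{(i)}_{\vec n}(x;\vec a)=\frac{(-1)^{n_i-1}e^{-a_i}}{(n_i-1)!\prod_{q\ne i}(a_i-a_q)^{n_q}}\sum_{\ell_1,\dots,\ell_p\ge0}(-n_i+1)_{L}\,(-x)_{\ell_i}\frac{(-1/a_i)^{\ell_i}}{\ell_i!}\prod_{q\ne i}\frac{(n_q)_{\ell_q}}{\ell_q!}\Big(\frac1{a_q-a_i}\Big)^{\ell_q},$$ with $L=\ell_1+\cdots+\ell_p$ (finite sum since $(-n_i+1)_L=0$ for $L\ge n_i$).
   Context: Charlier weights $w_i(x)=a_i^x/\Gamma(x+1)$ on $\mathbb N_0$. Type I polynomials $C^{(i)}_{\vec n}$: $\deg\le n_i-1$ (zero if $n_i=0$), $\sum_i\sum_{k\ge0}k^jC^{(i)}_{\vec n}(k)w_i(k)=0$ for $0\le j\le|\vec n|-2$, $=1$ for $j=|\vec n|-1$. $(a)_m$ Pochhammer symbol. *)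

theory Defs
  imports "HOL-Analysis.Analysis" "HOL-Computational_Algebra.Polynomial"
begin

text \<open>Indices are 0..p-1. Charlier weight w_i(k) = a_i^k / Gamma(k+1) = a_i^k / k!.\<close>
definition charlier_w :: "(nat \<Rightarrow> real) \<Rightarrow> nat \<Rightarrow> nat \<Rightarrow> real" where
  "charlier_w a i k = a i ^ k / fact k"

definition is_typeI_charlier ::
  "nat \<Rightarrow> (nat \<Rightarrow> real) \<Rightarrow> (nat \<Rightarrow> nat) \<Rightarrow> (nat \<Rightarrow> real poly) \<Rightarrow> bool" where
  "is_typeI_charlier p a n C \<longleftrightarrow>
     (\<forall>i<p. (n i = 0 \<longrightarrow> C i = 0) \<and> (n i \<ge> 1 \<longrightarrow> degree (C i) \<le> n i - 1)) \<and>
     (\<forall>j::nat. j + 2 \<le> (\<Sum>q<p. n q) \<longrightarrow>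
        (\<Sum>i<p. \<Sum>k. real k ^ j * poly (C i) (real k) * charlier_w a i k) = 0) \<and>
     (\<forall>j::nat. j + 1 = (\<Sum>q<p. n q) \<longrightarrow>
        (\<Sum>i<p. \<Sum>k. real k ^ j * poly (C i) (real k) * charlier_w a i k) = 1)"

text \<open>Explicit formula; the sum over l_1..l_p \<ge> 0 is restricted to L = l_1+...+l_p < n_i,
  the remaining terms vanish since the factor pochhammer (1 - n_i) L is 0 there.\<close>
definition charlier_formula ::
  "nat \<Rightarrow> (nat \<Rightarrow> real) \<Rightarrow> (nat \<Rightarrow> nat) \<Rightarrow> nat \<Rightarrow> real \<Rightarrow> real" where
  "charlier_formula p a n i x =
     (-1) ^ (n i - 1) * exp (- a i) /
       (fact (n i - 1) * (\<Prod>q\<in>{..<p} - {i}. (a i - a q) ^ n q)) *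
     (\<Sum>l\<in>{l::nat \<Rightarrow> nat. (\<forall>q. p \<le> q \<longrightarrow> l q = 0) \<and> (\<Sum>q<p. l q) < n i}.
        pochhammer (1 - real (n i)) (\<Sum>q<p. l q) * pochhammer (- x) (l i) *
        (-1 / a i) ^ l i / fact (l i) *
        (\<Prod>q\<in>{..<p} - {i}. pochhammer (real (n q)) (l q) / fact (l q) *
            (1 / (a q - a i)) ^ l q))"

end

theory Submission
  imports Defs "HOL-Computational_Algebra.Polynomial_Factorial" "HOL-Computational_Algebra.Polynomial_FPS"
    "HOL-Computational_Algebra.Field_as_Ring"
begin

text \<open>The type I conditions say that the functional \<open>L(\<pi>) = \<Sum>\<^sub>i \<Sum>\<^sub>k \<pi>(k) C\<^sub>i(k) w\<^sub>i(k)\<close>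
  vanishes on polynomials of degree \<open>< N - 1\<close>, \<open>N = |n|\<close>, and is \<open>1\<close> at \<open>x\<^bsup>N-1\<^esup>\<close>.

  Uniqueness: by summation by parts, replacing each \<open>C\<^sub>i\<close> by \<open>a\<^sub>i C\<^sub>i(x + 1) - a\<^sub>i\<^sub>0 C\<^sub>i(x)\<close> amounts to
  applying a degree-raising operator to the test polynomial. For the difference of two solutions this
  lowers \<open>n\<^sub>i\<^sub>0\<close> by one while keeping all moments zero, so by induction on \<open>N\<close> the shifted family
  vanishes. As the \<open>a\<^sub>i\<close> are distinct, only a constant \<open>C\<^sub>i\<^sub>0\<close> survives, and its moment against \<open>1\<close>
  kills it.

  Existence: against the falling factorial \<open>x(x - 1)\<cdots>(x - m + 1)\<close>, the explicit \<open>C\<^sub>i\<close> has moment equal to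
  the coefficient of \<open>X\<^bsup>n\<^sub>i-1\<^esup>\<close> in \<open>(a\<^sub>i + X)\<^sup>m \<Prod>\<^sub>q\<^sub>\<noteq>\<^sub>i (a\<^sub>i - a\<^sub>q + X)\<^bsup>-n\<^sub>q\<^esup>\<close>, i.e. the residue of
  \<open>x\<^sup>m / \<Prod>\<^sub>q (x - a\<^sub>q)\<^bsup>n\<^sub>q\<^esup>\<close> at \<open>a\<^sub>i\<close>; the residues add up to \<open>1\<close> if \<open>m = N - 1\<close> and to \<open>0\<close> if \<open>m < N - 1\<close>.\<close>

no_notation vec_nth (infixl \<open>$\<close> 90)
notation fps_nth (infixl \<open>$\<close> 75)

section \<open>The moment functional and the shift operator\<close>

lemma summable_power_mult_exp_series: "summable (\<lambda>k. real k ^ j * x ^ k / fact k)"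
proof (rule summable_comparison_test')
  show "summable (\<lambda>k. inverse (fact k) * (2 ^ j * \<bar>x\<bar>) ^ k)"
    by (rule summable_exp)
  fix k :: nat
  have "real k ^ j \<le> (2 ^ k) ^ j"
    by (rule power_mono) (use less_exp[of k] in \<open>auto simp: of_nat_less_iff[symmetric]\<close>)
  also have "\<dots> = (2 ^ j) ^ k"
    by (simp add: power_mult[symmetric] mult.commute)
  finally have "real k ^ j * \<bar>x\<bar> ^ k / fact k \<le> (2 ^ j) ^ k * \<bar>x\<bar> ^ k / fact k"
    by (intro divide_right_mono mult_right_mono) auto
  then show "norm (real k ^ j * x ^ k / fact k) \<le> inverse (fact k) * (2 ^ j * \<bar>x\<bar>) ^ k"
    by (simp add: abs_mult power_abs field_simps)
qed

lemma summable_poly_mult_charlier_w: "summable (\<lambda>k. poly Q (real k) * charlier_w a i k)"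
proof -
  have "(\<lambda>k. poly Q (real k) * charlier_w a i k) =
        (\<lambda>k. \<Sum>j\<le>degree Q. coeff Q j * (real k ^ j * a i ^ k / fact k))"
    by (simp add: poly_altdef charlier_w_def sum_distrib_right sum_divide_distrib mult.assoc)
  moreover have "summable (\<lambda>k. \<Sum>j\<le>degree Q. coeff Q j * (real k ^ j * a i ^ k / fact k))"
    by (intro summable_sum summable_mult summable_power_mult_exp_series)
  ultimately show ?thesis
    by simp
qed

lemma summable_charlier_moment_term:
  "summable (\<lambda>k. poly \<pi> (real k) * poly D (real k) * charlier_w a i k)"
  using summable_poly_mult_charlier_w[of "\<pi> * D" a i] by (simp add: mult.assoc)

lemma Suc_mult_exp_term: "real (Suc k) * (x ^ Suc k / fact (Suc k)) = x * (x ^ k / fact k)"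
  for x :: real
  by (simp del: of_nat_Suc add: field_simps)

definition charlier_moment :: "nat \<Rightarrow> (nat \<Rightarrow> real) \<Rightarrow> (nat \<Rightarrow> real poly) \<Rightarrow> real poly \<Rightarrow> real" where
  "charlier_moment p a C \<pi> = (\<Sum>i<p. \<Sum>k. poly \<pi> (real k) * poly (C i) (real k) * charlier_w a i k)"

lemma charlier_moment_monom:
  "(\<Sum>i<p. \<Sum>k. real k ^ j * poly (C i) (real k) * charlier_w a i k) = charlier_moment p a C (monom 1 j)"
  by (simp add: charlier_moment_def poly_monom)

lemma charlier_moment_expand:
  "charlier_moment p a C \<pi> = (\<Sum>j\<le>degree \<pi>. coeff \<pi> j * charlier_moment p a C (monom 1 j))"
proof -
  have "(\<Sum>k. poly \<pi> (real k) * poly (C i) (real k) * charlier_w a i k) =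
        (\<Sum>j\<le>degree \<pi>. coeff \<pi> j * (\<Sum>k. real k ^ j * poly (C i) (real k) * charlier_w a i k))" for i
  proof -
    have summable: "summable (\<lambda>k. real k ^ j * poly (C i) (real k) * charlier_w a i k)" for j
      using summable_charlier_moment_term[of "monom 1 j"] by (simp add: poly_monom)
    have "(\<Sum>k. poly \<pi> (real k) * poly (C i) (real k) * charlier_w a i k) =
          (\<Sum>k. \<Sum>j\<le>degree \<pi>. coeff \<pi> j * (real k ^ j * poly (C i) (real k) * charlier_w a i k))"
      by (simp add: poly_altdef[of \<pi>] sum_distrib_right mult.assoc)
    also have "\<dots> = (\<Sum>j\<le>degree \<pi>. \<Sum>k. coeff \<pi> j * (real k ^ j * poly (C i) (real k) * charlier_w a i k))"
      by (intro suminf_sum summable_mult summable)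
    also have "\<dots> = (\<Sum>j\<le>degree \<pi>. coeff \<pi> j * (\<Sum>k. real k ^ j * poly (C i) (real k) * charlier_w a i k))"
      by (intro sum.cong refl suminf_mult summable)
    finally show ?thesis .
  qed
  then show ?thesis
    by (simp add: charlier_moment_def poly_monom sum_distrib_left
        sum.swap[of _ "{..<p}"])
qed

lemma charlier_moment_diff:
  "charlier_moment p a (\<lambda>i. C i - C' i) \<pi> = charlier_moment p a C \<pi> - charlier_moment p a C' \<pi>"
  unfolding charlier_moment_def sum_subtractf[symmetric]
  by (intro sum.cong refl, subst suminf_diff[OF summable_charlier_moment_term summable_charlier_moment_term])
    (simp add: algebra_simps)

text \<open>Summation by parts against the weight, using \<open>(k + 1) w\<^sub>i(k + 1) = a\<^sub>i w\<^sub>i(k)\<close>: the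
  operator \<open>D \<mapsto> a\<^sub>i D(x + 1) - b D\<close> has the adjoint \<open>\<pi> \<mapsto> x \<pi>(x - 1) - b \<pi>\<close>.\<close>
definition shift_adjoint :: "real \<Rightarrow> real poly \<Rightarrow> real poly" where
  "shift_adjoint b \<pi> = [:0, 1:] * pcompose \<pi> [:-1, 1:] - smult b \<pi>"

lemma degree_shift_adjoint: "degree (shift_adjoint b \<pi>) \<le> degree \<pi> + 1"
proof -
  have "degree ([:0, 1:] * pcompose \<pi> [:-1, 1:]) \<le> degree \<pi> + 1"
    by (rule order.trans[OF degree_mult_le]) (simp add: degree_pcompose)
  moreover have "degree (smult b \<pi>) \<le> degree \<pi> + 1"
    using degree_smult_le[of b \<pi>] by linarith
  ultimately show ?thesis
    unfolding shift_adjoint_def by (rule degree_diff_le)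
qed

lemma suminf_shift_adjoint:
  "(\<Sum>k. poly \<pi> (real k) * poly (smult (a i) (pcompose D [:1, 1:]) - smult b D) (real k) * charlier_w a i k) =
   (\<Sum>k. poly (shift_adjoint b \<pi>) (real k) * poly D (real k) * charlier_w a i k)"
proof -
  define g where "g k = poly ([:0, 1:] * pcompose \<pi> [:-1, 1:]) (real k) * poly D (real k) * charlier_w a i k" for k
  define h where "h k = b * (poly \<pi> (real k) * poly D (real k) * charlier_w a i k)" for k
  have g: "summable g"
    unfolding g_def by (rule summable_charlier_moment_term)
  have h: "summable h"
    unfolding h_def by (intro summable_mult summable_charlier_moment_term)
  have g_Suc: "g (Suc k) = poly \<pi> (real k) * (a i * poly D (real k + 1)) * charlier_w a i k" for k
  proof -
    have Suc_k: "real (Suc k) = real k + 1"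
      by simp
    have "g (Suc k) = poly \<pi> (real k) * poly D (real k + 1) * (real (Suc k) * (a i ^ Suc k / fact (Suc k)))"
      unfolding g_def charlier_w_def Suc_k[symmetric]
      by (simp add: poly_pcompose Suc_k del: of_nat_Suc fact_Suc power_Suc)
    then show ?thesis
      unfolding Suc_mult_exp_term charlier_w_def by simp
  qed
  have "(\<Sum>k. poly \<pi> (real k) * poly (smult (a i) (pcompose D [:1, 1:]) - smult b D) (real k) * charlier_w a i k) =
        (\<Sum>k. g (Suc k) - h k)"
    by (simp add: g_Suc h_def poly_pcompose algebra_simps)
  also have "\<dots> = (\<Sum>k. g (Suc k)) - suminf h"
    by (rule suminf_diff[symmetric]) (use g h in \<open>simp_all add: summable_Suc_iff\<close>)
  also have "\<dots> = suminf g - suminf h"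
    by (simp only: suminf_split_head[OF g]) (simp add: g_def)
  also have "\<dots> = (\<Sum>k. g k - h k)"
    using g h by (rule suminf_diff)
  also have "\<dots> = (\<Sum>k. poly (shift_adjoint b \<pi>) (real k) * poly D (real k) * charlier_w a i k)"
    by (simp add: g_def h_def shift_adjoint_def algebra_simps)
  finally show ?thesis .
qed

lemma charlier_moment_shift:
  "charlier_moment p a (\<lambda>i. smult (a i) (pcompose (D i) [:1, 1:]) - smult b (D i)) \<pi> =
   charlier_moment p a D (shift_adjoint b \<pi>)"
  unfolding charlier_moment_def by (intro sum.cong refl suminf_shift_adjoint)

section \<open>Uniqueness\<close>

definition degree_below :: "real poly \<Rightarrow> nat \<Rightarrow> bool" where
  "degree_below D m \<longleftrightarrow> (\<forall>j\<ge>m. coeff D j = 0)"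

lemma degree_below_iff: "degree_below D m \<longleftrightarrow> D = 0 \<or> degree D < m"
  unfolding degree_below_def
  by (metis coeff_0 coeff_eq_0 le_less_trans leading_coeff_0_iff not_le)

lemma coeff_pcompose_linear_at_bound:
  fixes V :: "real poly"
  assumes "degree V \<le> d"
  shows "coeff (pcompose V [:c, 1:]) d = coeff V d"
proof (cases "degree V = d")
  case True
  then show ?thesis
    using lead_coeff_comp[of "[:c, 1:]" V] by (simp add: degree_pcompose)
next
  case False
  with assms show ?thesis
    by (simp add: coeff_eq_0 degree_pcompose)
qed

lemma degree_pcompose_shift_diff_le:
  fixes D :: "real poly"
  shows   "degree (smult c (pcompose D [:1, 1:]) - smult b D) \<le> degree D"
proof (rule degree_diff_le)
  show "degree (smult c (pcompose D [:1, 1:])) \<le> degree D"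
    using degree_smult_le[of c "pcompose D [:1, 1:]"] by (simp add: degree_pcompose)
  show "degree (smult b D) \<le> degree D"
    by (rule degree_smult_le)
qed

lemma degree_below_shift_diff:
  "degree_below D m \<Longrightarrow> degree_below (smult c (pcompose D [:1, 1:]) - smult b D) m"
  using degree_pcompose_shift_diff_le[of c D b] by (auto simp: degree_below_iff)

text \<open>With equal scalars the leading terms cancel, so the degree drops.\<close>
lemma degree_below_shift_diff_same:
  assumes "degree_below D (Suc m)"
  shows "degree_below (smult b (pcompose D [:1, 1:]) - smult b D) m"
proof -
  let ?E = "smult b (pcompose D [:1, 1:]) - smult b D"
  have "degree D \<le> m"
    using assms by (auto simp: degree_below_iff)
  then have "degree ?E \<le> m" and "coeff ?E m = 0"
    using degree_pcompose_shift_diff_le[of b D b] coeff_pcompose_linear_at_bound[of D m 1]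
    by auto
  then show ?thesis
    unfolding degree_below_def
    by (metis coeff_eq_0 le_less le_less_trans)
qed

lemma poly_const_if_pcompose_shift_eq:
  fixes D :: "real poly"
  assumes "pcompose D [:1, 1:] = D"
  shows "D = [:poly D 0:]"
proof -
  have periodic: "poly D (x + 1) = poly D x" for x
    using arg_cong[OF assms, of "\<lambda>q. poly q x"] by (simp add: poly_pcompose add.commute)
  have "poly D (real k) = poly D 0" for k
  proof (induction k)
    case (Suc k)
    then show ?case
      using periodic[of "real k"] by (simp add: add.commute)
  qed simp
  then have "range real \<subseteq> {x. poly (D - [:poly D 0:]) x = 0}"
    by auto
  moreover have "infinite (range real)"
    using range_inj_infinite[OF inj_of_nat] by simp
  ultimately have "D - [:poly D 0:] = 0"
    using poly_roots_finite finite_subset by blast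
  then show ?thesis by simp
qed

lemma pcompose_shift_eq_smult:
  fixes D :: "real poly"
  assumes eq: "smult c (pcompose D [:1, 1:]) = smult b D" and "c \<noteq> 0" and "D \<noteq> 0"
  shows "c = b" and "D = [:poly D 0:]"
proof -
  have "c * lead_coeff D = b * lead_coeff D"
    using arg_cong[OF eq, of "\<lambda>q. coeff q (degree D)"] coeff_pcompose_linear_at_bound[of D "degree D" 1]
    by simp
  then show "c = b"
    using \<open>D \<noteq> 0\<close> by simp
  with eq \<open>c \<noteq> 0\<close> show "D = [:poly D 0:]"
    by (intro poly_const_if_pcompose_shift_eq) (use smult_cancel in blast)
qed

lemma degree_below_shift_diff_update:
  assumes "\<forall>i<p. degree_below (D i) (n i)" and "n i0 \<ge> 1"
  shows "\<forall>i<p. degree_below (smult (a i) (pcompose (D i) [:1, 1:]) - smult (a i0) (D i))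
                            ((n(i0 := n i0 - 1)) i)"
proof (intro allI impI)
  fix i
  assume "i < p"
  show "degree_below (smult (a i) (pcompose (D i) [:1, 1:]) - smult (a i0) (D i)) ((n(i0 := n i0 - 1)) i)"
  proof (cases "i = i0")
    case True
    with assms \<open>i < p\<close> have "degree_below (D i0) (Suc (n i0 - 1))"
      by simp
    with True show ?thesis
      using degree_below_shift_diff_same[of "D i0" "n i0 - 1" "a i0"] by simp
  next
    case False
    with assms \<open>i < p\<close> show ?thesis
      using degree_below_shift_diff[of "D i" "n i" "a i" "a i0"] by simp
  qed
qed

text \<open>The family is killed by the shift operator with \<open>b = a\<^sub>i\<^sub>0\<close>: then the \<open>D\<^sub>i\<close> with \<open>a\<^sub>i \<noteq> a\<^sub>i\<^sub>0\<close>
  vanish and \<open>D\<^sub>i\<^sub>0\<close> is a constant, which its moment against \<open>1\<close> determines.\<close>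
lemma eq_zero_if_shift_diff_eq_zero:
  assumes pos: "\<forall>q<p. a q > 0" and inj: "inj_on a {..<p}" and "i0 < p"
    and shift_eq: "\<And>i. i < p \<Longrightarrow> smult (a i) (pcompose (D i) [:1, 1:]) = smult (a i0) (D i)"
    and moment: "charlier_moment p a D 1 = 0"
    and "i < p"
  shows "D i = 0"
proof -
  have a_nonzero: "a i \<noteq> 0" if "i < p" for i
    using pos that by (simp add: less_imp_neq[symmetric])
  have D_zero: "D i = 0" if "i < p" "i \<noteq> i0" for i
  proof (rule ccontr)
    assume "D i \<noteq> 0"
    then have "a i = a i0"
      using pcompose_shift_eq_smult(1)[OF shift_eq a_nonzero] \<open>i < p\<close> by blast
    with inj that \<open>i0 < p\<close> show False
      by (auto dest: inj_onD)
  qed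
  obtain c where c: "D i0 = [:c:]"
    using pcompose_shift_eq_smult(2)[OF shift_eq a_nonzero] \<open>i0 < p\<close> by (metis pCons_0_0)
  have "charlier_moment p a D 1 = (\<Sum>k. c * (a i0 ^ k / fact k))"
    unfolding charlier_moment_def using \<open>i0 < p\<close> D_zero
    by (subst sum.remove[of _ i0]) (auto simp: c charlier_w_def)
  also have "\<dots> = c * exp (a i0)"
    using exp_converges[of "a i0"] by (simp add: sums_iff suminf_mult divide_inverse mult.commute scaleR_conv_of_real)
  finally have "c = 0"
    using moment by simp
  with D_zero c \<open>i < p\<close> show ?thesis
    by (cases "i = i0") auto
qed

text \<open>Induction on \<open>\<Sum> n\<^sub>q\<close>: by \<open>charlier_moment_shift\<close>, applying the shift operator with
  \<open>b = a\<^sub>i\<^sub>0\<close> gives a family with the degree bound at \<open>i\<^sub>0\<close> lowered and still vanishing moments.\<close>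
lemma charlier_moment_vanishing_imp_zero:
  assumes pos: "\<forall>q<p. a q > 0" and inj: "inj_on a {..<p}"
    and "\<forall>i<p. degree_below (D i) (n i)"
    and "\<And>\<pi>. degree \<pi> < (\<Sum>q<p. n q) \<Longrightarrow> charlier_moment p a D \<pi> = 0"
    and "i < p"
  shows "D i = 0"
  using assms(3-5)
proof (induction "\<Sum>q<p. n q" arbitrary: n D i)
  case 0
  then show ?case
    by (simp add: degree_below_iff)
next
  case (Suc N)
  have "\<exists>i0<p. n i0 \<ge> 1"
  proof (rule ccontr)
    assume "\<not> (\<exists>i0<p. n i0 \<ge> 1)"
    then have "(\<Sum>q<p. n q) = 0"
      by (intro sum.neutral) auto
    with Suc.hyps(2) show False
      by simp
  qed
  then obtain i0 where i0: "i0 < p" "n i0 \<ge> 1"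
    by blast
  define n' where "n' = n(i0 := n i0 - 1)"
  define D' where "D' = (\<lambda>i. smult (a i) (pcompose (D i) [:1, 1:]) - smult (a i0) (D i))"
  have "(\<Sum>q<p. n q) = n i0 + (\<Sum>q\<in>{..<p} - {i0}. n q)"
       "(\<Sum>q<p. n' q) = n' i0 + (\<Sum>q\<in>{..<p} - {i0}. n' q)"
    using i0 by (simp_all add: sum.remove)
  moreover have "(\<Sum>q\<in>{..<p} - {i0}. n' q) = (\<Sum>q\<in>{..<p} - {i0}. n q)"
    by (intro sum.cong) (auto simp: n'_def)
  ultimately have sum_n': "N = (\<Sum>q<p. n' q)"
    using Suc.hyps(2) i0 by (simp add: n'_def)
  have deg_D': "\<forall>i<p. degree_below (D' i) (n' i)"
    unfolding D'_def n'_def using Suc.prems(1) i0(2) by (rule degree_below_shift_diff_update)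
  have moment_D': "charlier_moment p a D' \<pi> = 0" if "degree \<pi> < (\<Sum>q<p. n' q)" for \<pi>
  proof -
    have "degree (shift_adjoint (a i0) \<pi>) < (\<Sum>q<p. n q)"
      using degree_shift_adjoint[of "a i0" \<pi>] that sum_n' Suc.hyps(2) by linarith
    then show ?thesis
      unfolding D'_def charlier_moment_shift by (rule Suc.prems(2))
  qed
  have "D' i = 0" if "i < p" for i
    using Suc.hyps(1)[OF sum_n' deg_D' moment_D' that] .
  then have "smult (a i) (pcompose (D i) [:1, 1:]) = smult (a i0) (D i)" if "i < p" for i
    using that by (simp add: D'_def)
  moreover have "charlier_moment p a D 1 = 0"
    using Suc.prems(2)[of 1] Suc.hyps(2) by simp
  ultimately show ?case
    using eq_zero_if_shift_diff_eq_zero[OF pos inj i0(1)] Suc.prems(3) by blast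
qed

section \<open>A partial fraction identity\<close>

lemma pcompose_power_left: "pcompose (P ^ k) Q = pcompose P Q ^ k"
  for P Q :: "'a::comm_semiring_1 poly"
  by (induction k) (simp_all add: pcompose_mult pcompose_1)

lemma coprime_linear_powers:
  fixes x y :: real
  assumes "x \<noteq> y"
  shows "coprime ([:-x, 1:] ^ k) ([:-y, 1:] ^ l)"
proof -
  have "coprime [:-x, 1:] [:-y, 1:]"
  proof (rule coprimeI)
    fix c
    assume "c dvd [:-x, 1:]" "c dvd [:-y, 1:]"
    then have "c dvd [:y - x:]"
      using dvd_diff[of c "[:-x, 1:]" "[:-y, 1:]"] by simp
    moreover have "is_unit [:y - x:]"
      using assms by (simp add: is_unit_const_poly_iff dvd_field_iff)
    ultimately show "is_unit c"
      by (rule dvd_unit_imp_unit)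
  qed
  then show ?thesis
    by simp
qed

lemma prod_linear_powers_dvd:
  fixes a :: "nat \<Rightarrow> real"
  assumes "finite A" "inj_on a A" "\<forall>j\<in>A. [:-a j, 1:] ^ n j dvd W"
  shows "(\<Prod>j\<in>A. [:-a j, 1:] ^ n j) dvd W"
  using assms
proof (induction A rule: finite_induct)
  case (insert x A)
  have "coprime ([:-a x, 1:] ^ n x) ([:-a j, 1:] ^ n j)" if "j \<in> A" for j
    using insert.prems(1) insert.hyps(2) that by (intro coprime_linear_powers) (auto dest: inj_onD)
  then have "coprime ([:-a x, 1:] ^ n x) (\<Prod>j\<in>A. [:-a j, 1:] ^ n j)"
    by (rule prod_coprime_right)
  with insert show ?case
    by (simp add: divides_mult)
qed simp

lemma coeff_mult_at_degree_bounds: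
  fixes P Q :: "'a::comm_semiring_1 poly"
  assumes "degree P \<le> dp" "degree Q \<le> dq"
  shows "coeff (P * Q) (dp + dq) = coeff P dp * coeff Q dq"
proof -
  have "coeff (P * Q) (dp + dq) = (\<Sum>t\<le>dp + dq. coeff P t * coeff Q (dp + dq - t))"
    by (simp add: coeff_mult)
  also have "\<dots> = (\<Sum>t\<in>{dp}. coeff P t * coeff Q (dp + dq - t))"
  proof (rule sum.mono_neutral_right)
    show "\<forall>t\<in>{..dp + dq} - {dp}. coeff P t * coeff Q (dp + dq - t) = 0"
    proof
      fix t
      assume "t \<in> {..dp + dq} - {dp}"
      then consider "dp < t" | "t < dp" "degree Q < dp + dq - t"
        using assms(2) by fastforce
      then show "coeff P t * coeff Q (dp + dq - t) = 0"
        using assms(1) by cases (simp_all add: coeff_eq_0)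
    qed
  qed auto
  finally show ?thesis
    by simp
qed

lemma degree_prod_linear_powers: "degree (\<Prod>q\<in>A. [:b q, 1::real:] ^ n q) = (\<Sum>q\<in>A. n q)"
  by (subst degree_prod_eq_sum_degree) (auto simp: degree_linear_power)

lemma lead_coeff_prod_linear_powers: "lead_coeff (\<Prod>q\<in>A. [:b q, 1::real:] ^ n q) = 1"
  by (simp add: lead_coeff_prod lead_coeff_power)

lemma linear_power_dvd_if_shifted_coeffs_zero:
  fixes Z :: "real poly"
  assumes "\<forall>k<n. coeff (pcompose Z [:c, 1:]) k = 0"
  shows "[:-c, 1:] ^ n dvd Z"
proof -
  obtain R where R: "pcompose Z [:c, 1:] = monom 1 n * R"
    using assms unfolding monom_1_dvd_iff'[symmetric] by (elim dvdE)
  have "Z = pcompose (pcompose Z [:c, 1:]) [:-c, 1:]"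
    by (simp add: pcompose_assoc[symmetric] pcompose_pCons)
  also have "\<dots> = [:-c, 1:] ^ n * pcompose R [:-c, 1:]"
    by (simp add: R pcompose_mult monom_altdef pcompose_power_left pcompose_pCons)
  finally show ?thesis
    by (metis dvd_triv_left)
qed

lemma linear_power_dvd_shifted_remainder:
  fixes V E :: "real poly"
  assumes "\<forall>k<n. coeff (V * pcompose E [:c, 1:]) k = coeff ([:c, 1:] ^ m) k"
  shows "[:-c, 1:] ^ n dvd pcompose V [:-c, 1:] * E - [:0, 1:] ^ m"
proof (rule linear_power_dvd_if_shifted_coeffs_zero)
  have "pcompose (pcompose V [:-c, 1:] * E - [:0, 1:] ^ m) [:c, 1:] = V * pcompose E [:c, 1:] - [:c, 1:] ^ m"
    by (simp add: pcompose_diff pcompose_mult pcompose_power_left pcompose_assoc[symmetric] pcompose_pCons)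
  with assms show "\<forall>k<n. coeff (pcompose (pcompose V [:-c, 1:] * E - [:0, 1:] ^ m) [:c, 1:]) k = 0"
    by simp
qed

lemma coeff_pcompose_linear_mult_monic:
  fixes V E :: "real poly"
  assumes "degree V \<le> d" and "lead_coeff E = 1"
  shows "coeff (pcompose V [:c, 1:] * E) (d + degree E) = coeff V d"
proof -
  have "degree (pcompose V [:c, 1:]) \<le> d"
    using assms(1) by (simp add: degree_pcompose)
  then have "coeff (pcompose V [:c, 1:] * E) (d + degree E) = coeff (pcompose V [:c, 1:]) d * lead_coeff E"
    by (rule coeff_mult_at_degree_bounds) simp
  with assms show ?thesis
    by (simp add: coeff_pcompose_linear_at_bound)
qed

text \<open>Here \<open>V\<^sub>i(x) \<Prod>\<^sub>q\<^sub>\<noteq>\<^sub>i (x + a\<^sub>i - a\<^sub>q)\<^bsup>n\<^sub>q\<^esup>\<close> agrees with \<open>(x + a\<^sub>i)\<^sup>m\<close> up to order \<open>n\<^sub>i\<close>.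
  Then \<open>\<Sum>\<^sub>i V\<^sub>i(x - a\<^sub>i) \<Prod>\<^sub>q\<^sub>\<noteq>\<^sub>i (x - a\<^sub>q)\<^bsup>n\<^sub>q\<^esup> - x\<^sup>m\<close> has degree \<open>< N\<close> and is divisible by every
  \<open>(x - a\<^sub>j)\<^bsup>n\<^sub>j\<^esup>\<close>, hence vanishes; its coefficient of \<open>x\<^bsup>N-1\<^esup>\<close> gives the identity
  (a partial fraction decomposition of \<open>x\<^sup>m / \<Prod>\<^sub>q (x - a\<^sub>q)\<^bsup>n\<^sub>q\<^esup>\<close> in disguise).\<close>
lemma partial_fraction_top_coeff_sum:
  fixes a :: "nat \<Rightarrow> real" and n :: "nat \<Rightarrow> nat" and V :: "nat \<Rightarrow> real poly"
  assumes inj: "inj_on a {..<p}" and m: "m < (\<Sum>q<p. n q)"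
    and deg_V: "\<forall>i<p. degree_below (V i) (n i)"
    and congr: "\<forall>i<p. \<forall>k<n i.
      coeff (V i * (\<Prod>q\<in>{..<p} - {i}. [:a i - a q, 1:] ^ n q)) k = coeff ([:a i, 1:] ^ m) k"
  shows "(\<Sum>i<p. if n i = 0 then 0 else coeff (V i) (n i - 1)) = (if m = (\<Sum>q<p. n q) - 1 then 1 else 0)"
proof -
  define N where "N = (\<Sum>q<p. n q)"
  define E where "E i = (\<Prod>q\<in>{..<p} - {i}. [:-a q, 1:] ^ n q)" for i
  define T where "T i = pcompose (V i) [:-a i, 1:] * E i" for i
  define W where "W = (\<Sum>i<p. T i) - [:0, 1:] ^ m"
  have N_split: "N = n i + (\<Sum>q\<in>{..<p} - {i}. n q)" if "i < p" for i
    unfolding N_def using that by (simp add: sum.remove)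
  have degree_E: "degree (E i) = (\<Sum>q\<in>{..<p} - {i}. n q)" for i
    unfolding E_def by (rule degree_prod_linear_powers)
  have dvd_W: "[:-a j, 1:] ^ n j dvd W" if "j < p" for j
  proof -
    have "[:-a j, 1:] ^ n j dvd T i" if "i \<in> {..<p} - {j}" for i
      using that \<open>j < p\<close> unfolding T_def E_def by (intro dvd_mult dvd_prodI) auto
    then have "[:-a j, 1:] ^ n j dvd (\<Sum>i\<in>{..<p} - {j}. T i)"
      by (rule dvd_sum)
    moreover have "pcompose (E j) [:a j, 1:] = (\<Prod>q\<in>{..<p} - {j}. [:a j - a q, 1:] ^ n q)"
      unfolding E_def by (simp add: pcompose_prod pcompose_power_left pcompose_pCons)
    then have "[:-a j, 1:] ^ n j dvd T j - [:0, 1:] ^ m"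
      unfolding T_def using congr \<open>j < p\<close> by (intro linear_power_dvd_shifted_remainder) simp
    moreover have "W = (\<Sum>i\<in>{..<p} - {j}. T i) + (T j - [:0, 1:] ^ m)"
      unfolding W_def using \<open>j < p\<close> by (simp add: sum.remove)
    ultimately show ?thesis
      by simp
  qed
  have "degree (T i) \<le> N - 1" if "i < p" for i
  proof (cases "V i = 0")
    case False
    then have "degree (pcompose (V i) [:-a i, 1:]) + degree (E i) \<le> N - 1"
      using deg_V that N_split[OF that] by (auto simp: degree_below_iff degree_pcompose degree_E)
    then show ?thesis
      unfolding T_def using degree_mult_le order.trans by blast
  qed (simp add: T_def)
  then have "degree W \<le> N - 1"
    unfolding W_def using m by (intro degree_diff_le degree_sum_le) (auto simp: N_def degree_linear_power)
  moreover have "(\<Prod>j<p. [:-a j, 1:] ^ n j) dvd W"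
    using prod_linear_powers_dvd[of "{..<p}" a n W] inj dvd_W by auto
  ultimately have "W = 0"
    using dvd_imp_degree_le[of "\<Prod>j<p. [:-a j, 1:] ^ n j" W] m
    by (cases "W = 0") (auto simp: degree_prod_linear_powers N_def)
  have coeff_T: "coeff (T i) (N - 1) = (if n i = 0 then 0 else coeff (V i) (n i - 1))" if "i < p" for i
  proof (cases "n i = 0")
    case True
    then have "V i = 0"
      using deg_V that by (auto simp: degree_below_iff)
    with True show ?thesis
      by (simp add: T_def)
  next
    case False
    have deg_Vi: "degree (V i) \<le> n i - 1"
      using deg_V that by (auto simp: degree_below_iff)
    have N_minus_1: "N - 1 = (n i - 1) + degree (E i)"
      using N_split[OF that] False by (simp add: degree_E)
    have "coeff (T i) (N - 1) = coeff (V i) (n i - 1)"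
      unfolding T_def N_minus_1 using deg_Vi
      by (rule coeff_pcompose_linear_mult_monic) (simp add: E_def lead_coeff_prod_linear_powers)
    with False show ?thesis
      by simp
  qed
  have "0 = coeff W (N - 1)"
    using \<open>W = 0\<close> by simp
  also have "\<dots> = (\<Sum>i<p. coeff (T i) (N - 1)) - (if m = N - 1 then 1 else 0)"
    unfolding W_def by (simp add: coeff_sum monom_altdef[of 1, simplified, symmetric])
  finally show ?thesis
    using coeff_T by (simp add: N_def)
qed

section \<open>Power series identities\<close>

lemma fps_neg_binomial_times_linear:
  fixes c d :: real
  assumes cd: "c * d = -1"
  shows "Abs_fps (\<lambda>l. pochhammer (real (Suc k)) l / fact l * c ^ l) * (fps_const d + fps_X) =
         fps_const d * Abs_fps (\<lambda>l. pochhammer (real k) l / fact l * c ^ l)"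
proof (rule fps_ext)
  fix l
  show "(Abs_fps (\<lambda>l. pochhammer (real (Suc k)) l / fact l * c ^ l) * (fps_const d + fps_X)) $ l =
        (fps_const d * Abs_fps (\<lambda>l. pochhammer (real k) l / fact l * c ^ l)) $ l"
  proof (cases l)
    case 0
    then show ?thesis
      by (simp add: distrib_left)
  next
    case (Suc j)
    have poch_diff: "pochhammer (real k + 1) (Suc j) - pochhammer (real k) (Suc j) =
                     (real j + 1) * pochhammer (real k + 1) j"
      by (simp only: pochhammer_rec'[of "real k + 1"] pochhammer_rec[of "real k"]) (simp add: algebra_simps)
    have "d * c ^ Suc j = (c * d) * c ^ j"
      by (simp add: mult_ac)
    with cd have d_c: "d * c ^ Suc j = - (c ^ j)"
      by simp
    have "d * (pochhammer (real k + 1) (Suc j) / fact (Suc j) * c ^ Suc j) -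
          d * (pochhammer (real k) (Suc j) / fact (Suc j) * c ^ Suc j) =
          d * c ^ Suc j * (pochhammer (real k + 1) (Suc j) - pochhammer (real k) (Suc j)) / fact (Suc j)"
      by (simp add: diff_divide_distrib algebra_simps)
    also have "\<dots> = - (pochhammer (real k + 1) j / fact j * c ^ j)"
      using fact_gt_zero[of j, where 'a = real]
      unfolding d_c poch_diff by (simp add: field_simps add_pos_nonneg less_imp_neq[symmetric])
    finally have step: "d * (pochhammer (real k + 1) (Suc j) / fact (Suc j) * c ^ Suc j) +
                        pochhammer (real k + 1) j / fact j * c ^ j =
                        d * (pochhammer (real k) (Suc j) / fact (Suc j) * c ^ Suc j)"
      by linarith
    have "(Abs_fps (\<lambda>l. pochhammer (real (Suc k)) l / fact l * c ^ l) * (fps_const d + fps_X)) $ Suc j =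
          d * (pochhammer (real k + 1) (Suc j) / fact (Suc j) * c ^ Suc j) +
          pochhammer (real k + 1) j / fact j * c ^ j"
      by (simp add: distrib_left mult.commute[of _ fps_X] add.commute del: fact_Suc power_Suc)
    also have "\<dots> = (fps_const d * Abs_fps (\<lambda>l. pochhammer (real k) l / fact l * c ^ l)) $ Suc j"
      by (simp only: step) simp
    finally show ?thesis
      using Suc by simp
  qed
qed

text \<open>The series of \<open>(1 - c X)\<^bsup>-k\<^esup>\<close> inverts \<open>(1 - c X)\<^sup>k = d\<^bsup>-k\<^esup> (d + X)\<^sup>k\<close>.\<close>
lemma fps_neg_binomial_times_linear_power:
  fixes c d :: real
  assumes "c * d = -1"
  shows "Abs_fps (\<lambda>l. pochhammer (real k) l / fact l * c ^ l) * (fps_const d + fps_X) ^ k = fps_const (d ^ k)"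
proof (induction k)
  case 0
  have "Abs_fps (\<lambda>l. pochhammer (real 0) l / fact l * c ^ l) = 1"
    by (rule fps_ext) (simp add: pochhammer_0_left)
  then show ?case
    by simp
next
  case (Suc k)
  have "Abs_fps (\<lambda>l. pochhammer (real (Suc k)) l / fact l * c ^ l) * (fps_const d + fps_X) ^ Suc k =
        fps_const d * (Abs_fps (\<lambda>l. pochhammer (real k) l / fact l * c ^ l) * (fps_const d + fps_X) ^ k)"
    by (simp only: power_Suc mult.assoc[symmetric] fps_neg_binomial_times_linear[OF assms])
  with Suc show ?case
    by (simp flip: fps_const_mult)
qed

definition compositions :: "nat \<Rightarrow> nat \<Rightarrow> (nat \<Rightarrow> nat) set" where
  "compositions p s = {l. (\<forall>q. p \<le> q \<longrightarrow> l q = 0) \<and> (\<Sum>q<p. l q) = s}"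

lemma finite_bounded_compositions:
  "finite {l :: nat \<Rightarrow> nat. (\<forall>q. p \<le> q \<longrightarrow> l q = 0) \<and> (\<Sum>q<p. l q) \<le> s}"
proof (rule finite_subset)
  show "finite {l. \<forall>x. (x \<in> {..<p} \<longrightarrow> l x \<in> {..s}) \<and> (x \<notin> {..<p} \<longrightarrow> l x = (0::nat))}"
    using finite_set_of_finite_funs[of "{..<p}" "{..s}" 0] by simp
  show "{l :: nat \<Rightarrow> nat. (\<forall>q. p \<le> q \<longrightarrow> l q = 0) \<and> (\<Sum>q<p. l q) \<le> s} \<subseteq>
        {l. \<forall>x. (x \<in> {..<p} \<longrightarrow> l x \<in> {..s}) \<and> (x \<notin> {..<p} \<longrightarrow> l x = 0)}"
  proof (intro subsetI CollectI allI conjI impI)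
    fix l :: "nat \<Rightarrow> nat" and x
    assume l: "l \<in> {l. (\<forall>q. p \<le> q \<longrightarrow> l q = 0) \<and> (\<Sum>q<p. l q) \<le> s}"
    show "l x \<in> {..s}" if "x \<in> {..<p}"
      using l that member_le_sum[of x "{..<p}" l] by auto
    show "l x = 0" if "x \<notin> {..<p}"
      using l that by auto
  qed
qed

lemma finite_compositions: "finite (compositions p s)"
  by (rule finite_subset[OF _ finite_bounded_compositions[of p s]]) (auto simp: compositions_def)

lemma fps_prod_nth_compositions:
  "(\<Sum>l\<in>compositions p s. \<Prod>q<p. f q (l q)) = (\<Prod>q<p. Abs_fps (f q)) $ s"
proof (induction p arbitrary: s)
  case 0
  have "compositions 0 s = (if s = 0 then {\<lambda>_. 0} else {})"
    by (auto simp: compositions_def)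
  then show ?case
    by simp
next
  case (Suc p)
  define g where "g = (\<lambda>u l. (\<Prod>q<p. f q (l q)) * f p (s - u))"
  have sum_upd: "(\<Sum>q<p. (l(p := v)) q) = (\<Sum>q<p. l q)" for l :: "nat \<Rightarrow> nat" and v
    by (intro sum.cong) auto
  have prod_upd: "(\<Prod>q<p. f q ((l(p := v)) q)) = (\<Prod>q<p. f q (l q))" for l :: "nat \<Rightarrow> nat" and v
    by (intro prod.cong) auto
  have "(\<Prod>q<Suc p. Abs_fps (f q)) $ s = (\<Sum>u\<in>{0..s}. (\<Sum>l\<in>compositions p u. \<Prod>q<p. f q (l q)) * f p (s - u))"
    by (simp add: fps_mult_nth Suc.IH)
  also have "\<dots> = (\<Sum>(u, l)\<in>Sigma {0..s} (compositions p). g u l)"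
    by (simp add: g_def sum_distrib_right sum.Sigma finite_compositions)
  also have "\<dots> = (\<Sum>l\<in>compositions (Suc p) s. \<Prod>q<Suc p. f q (l q))"
  proof (rule sum.reindex_bij_witness[where j = "\<lambda>(u, l). l(p := s - u)" and i = "\<lambda>l. (\<Sum>q<p. l q, l(p := 0))"])
    fix x
    assume "x \<in> Sigma {0..s} (compositions p)"
    then obtain u l where x: "x = (u, l)" "u \<le> s" "l \<in> compositions p u"
      by auto
    then have "l p = 0" "(\<Sum>q<p. l q) = u" "\<forall>q. p \<le> q \<longrightarrow> l q = 0"
      by (simp_all add: compositions_def)
    with x show "(\<lambda>l. (\<Sum>q<p. l q, l(p := 0))) ((\<lambda>(u, l). l(p := s - u)) x) = x"
      by (simp add: sum_upd fun_upd_idem)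
    from x \<open>(\<Sum>q<p. l q) = u\<close> \<open>\<forall>q. p \<le> q \<longrightarrow> l q = 0\<close>
    show "(\<lambda>(u, l). l(p := s - u)) x \<in> compositions (Suc p) s"
      by (auto simp: compositions_def sum_upd)
    from x show "(\<Prod>q<Suc p. f q (((\<lambda>(u, l). l(p := s - u)) x) q)) = (\<lambda>(u, l). g u l) x"
      by (simp add: g_def prod_upd)
  next
    fix l
    assume "l \<in> compositions (Suc p) s"
    then have "(\<Sum>q<p. l q) + l p = s" "\<forall>q. Suc p \<le> q \<longrightarrow> l q = 0"
      by (simp_all add: compositions_def)
    then show "(\<lambda>(u, l). l(p := s - u)) ((\<lambda>l. (\<Sum>q<p. l q, l(p := 0))) l) = l"
      and "(\<lambda>l. (\<Sum>q<p. l q, l(p := 0))) l \<in> Sigma {0..s} (compositions p)"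
      by (auto simp: fun_eq_iff compositions_def sum_upd)
  qed
  finally show ?case
    by simp
qed

lemma pochhammer_one_minus:
  assumes "s < n"
  shows "pochhammer (1 - real n) s = (-1) ^ s * fact (n - 1) / fact (n - 1 - s)"
proof -
  have "1 - real n = - real (n - 1)"
    using assms by simp
  then have "pochhammer (1 - real n) s = (-1) ^ s * pochhammer (real (n - 1) - real s + 1) s"
    by (simp only: pochhammer_minus)
  also have "pochhammer (real (n - 1) - real s + 1) s = fact s * (real (n - 1) gchoose s)"
    by (simp add: gbinomial_pochhammer')
  also have "real (n - 1) gchoose s = fact (n - 1) / (fact s * fact (n - 1 - s))"
    using binomial_gbinomial[of "n - 1" s, symmetric] assms by (simp add: binomial_fact)
  finally show ?thesis
    by simp
qed

lemma sum_pochhammer_one_minus_fps_nth: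
  fixes G :: "real fps"
  assumes "n \<ge> 1"
  shows "(\<Sum>s<n. pochhammer (1 - real n) s * G $ s) =
         (-1) ^ (n - 1) * fact (n - 1) * (fps_exp (-1) * G) $ (n - 1)"
proof -
  have "(fps_exp (-1) * G) $ (n - 1) = (\<Sum>i=0..n - 1. (-1) ^ i / fact i * G $ (n - 1 - i))"
    by (simp add: fps_mult_nth)
  also have "\<dots> = (\<Sum>s=0..n - 1. (-1) ^ (n - 1 - s) / fact (n - 1 - s) * G $ s)"
    using assms by (subst sum.atLeastAtMost_rev) (auto intro!: sum.cong arg_cong[where f = "fps_nth G"])
  also have "\<dots> = (\<Sum>s<n. (-1) ^ (n - 1 - s) / fact (n - 1 - s) * G $ s)"
    using assms by (simp add: atLeast0AtMost lessThan_Suc_atMost[symmetric])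
  finally have expand: "(-1) ^ (n - 1) * fact (n - 1) * (fps_exp (-1) * G) $ (n - 1) =
      (\<Sum>s<n. (-1) ^ (n - 1) * fact (n - 1) * ((-1) ^ (n - 1 - s) / fact (n - 1 - s) * G $ s))"
    by (simp add: sum_distrib_left)
  have "(-1) ^ (n - 1) * fact (n - 1) * ((-1) ^ (n - 1 - s) / fact (n - 1 - s) * G $ s) =
        pochhammer (1 - real n) s * G $ s" if "s < n" for s
  proof -
    have "(-1 :: real) ^ (n - 1) = (-1) ^ s * (-1) ^ (n - 1 - s)"
      using that by (simp flip: power_add)
    then have "(-1 :: real) ^ (n - 1) * (-1) ^ (n - 1 - s) = (-1) ^ s * ((-1) * (-1)) ^ (n - 1 - s)"
      by (simp only: power_mult_distrib mult_ac)
    then show ?thesis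
      using that by (simp add: pochhammer_one_minus field_simps)
  qed
  then show ?thesis
    unfolding expand by (intro sum.cong) auto
qed

section \<open>Moments of the explicit polynomials\<close>

lemma fps_linear_power_exp_nth:
  "(fps_of_poly ([:x, 1:] ^ m) * fps_exp 1) $ u = (\<Sum>t\<le>u. real (m choose t) * x ^ (m - t) / fact (u - t))"
proof -
  have "(fps_of_poly ([:x, 1:] ^ m) * fps_exp 1) $ u = (\<Sum>t\<le>u. coeff ([:x, 1:] ^ m) t / fact (u - t))"
    by (simp add: fps_mult_nth atLeast0AtMost)
  also have "\<dots> = (\<Sum>t\<le>u. real (m choose t) * x ^ (m - t) / fact (u - t))"
  proof (intro sum.cong refl)
    fix t
    show "coeff ([:x, 1:] ^ m) t / fact (u - t) = real (m choose t) * x ^ (m - t) / fact (u - t)"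
      by (cases "t \<le> m") (simp_all add: coeff_linear_poly_power coeff_eq_0 degree_linear_power)
  qed
  finally show ?thesis .
qed

fun falling_poly :: "nat \<Rightarrow> real poly" where
  "falling_poly 0 = 1"
| "falling_poly (Suc m) = falling_poly m * [:- of_nat m, 1:]"

lemma lead_coeff_falling_poly: "lead_coeff (falling_poly m) = 1"
proof (induction m)
  case (Suc m)
  then show ?case
    by (simp only: falling_poly.simps lead_coeff_mult) simp
qed simp

lemma degree_falling_poly: "degree (falling_poly m) = m"
proof (induction m)
  case (Suc m)
  have "falling_poly m \<noteq> 0"
    using lead_coeff_falling_poly[of m] by auto
  then have "degree (falling_poly m * [:- of_nat m, 1:]) = degree (falling_poly m) + 1"
    by (subst degree_mult_eq) auto
  with Suc show ?case
    by simp
qed simp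

lemma poly_falling_poly_of_nat:
  "poly (falling_poly m) (real k) = (if m \<le> k then fact k / fact (k - m) else 0)"
proof (induction m)
  case (Suc m)
  show ?case
  proof (cases "Suc m \<le> k")
    case True
    then have fact_eq: "fact (k - m) = (real k - real m) * fact (k - Suc m)"
      by (simp add: fact_reduce)
    have "poly (falling_poly (Suc m)) (real k) = poly (falling_poly m) (real k) * (real k - real m)"
      by (simp add: algebra_simps)
    also have "\<dots> = fact k / fact (k - m) * (real k - real m)"
      using Suc True by simp
    also have "\<dots> = fact k / fact (k - Suc m)"
      using True by (simp add: fact_eq)
    finally show ?thesis
      using True by simp
  next
    case False
    with Suc show ?thesis
      by (cases "m = k") auto
  qed
qed simp

lemma sums_choose_exp_series: "(\<lambda>j. real (j choose r) * x ^ j / fact j) sums (x ^ r * exp x / fact r)"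
proof -
  have "(\<lambda>j. x ^ r / fact r * (x ^ j / fact j)) sums (x ^ r / fact r * exp x)"
    by (rule sums_mult) (use exp_converges[of x] in \<open>simp add: divide_inverse mult.commute scaleR_conv_of_real\<close>)
  moreover have "real ((j + r) choose r) * x ^ (j + r) / fact (j + r) = x ^ r / fact r * (x ^ j / fact j)" for j
    using binomial_fact[of r "j + r", where 'a = real] by (simp add: power_add field_simps)
  ultimately have "(\<lambda>j. real ((j + r) choose r) * x ^ (j + r) / fact (j + r)) sums (x ^ r * exp x / fact r)"
    by simp
  then show ?thesis
    by (subst (asm) sums_zero_iff_shift) auto
qed

text \<open>After the shift \<open>k = j + m\<close>, Vandermonde's identity splits \<open>k choose u\<close> into terms
  handled by \<open>sums_choose_exp_series\<close>.\<close>
lemma sums_falling_choose_exp_series: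
  fixes x :: real
  assumes "x \<noteq> 0"
  shows "(\<lambda>k. poly (falling_poly m) (real k) * (real (k choose u) / x ^ u) * (x ^ k / fact k)) sums
         (exp x * (fps_of_poly ([:x, 1:] ^ m) * fps_exp 1) $ u)"
proof -
  define f where "f k = poly (falling_poly m) (real k) * (real (k choose u) / x ^ u) * (x ^ k / fact k)" for k
  have f_shift: "f (j + m) = (\<Sum>t\<le>u. real (m choose t) * x ^ m / x ^ u * (real (j choose (u - t)) * x ^ j / fact j))" for j
  proof -
    have "f (j + m) = real ((m + j) choose u) * x ^ m / x ^ u * (x ^ j / fact j)"
      unfolding f_def poly_falling_poly_of_nat by (simp add: power_add field_simps)
    also have "real ((m + j) choose u) = (\<Sum>t\<le>u. real (m choose t) * real (j choose (u - t)))"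
      by (simp flip: vandermonde)
    also have "(\<Sum>t\<le>u. real (m choose t) * real (j choose (u - t))) * x ^ m / x ^ u * (x ^ j / fact j) =
               (\<Sum>t\<le>u. real (m choose t) * x ^ m / x ^ u * (real (j choose (u - t)) * x ^ j / fact j))"
      unfolding sum_distrib_right sum_divide_distrib by (intro sum.cong refl) (simp add: field_simps)
    finally show ?thesis .
  qed
  have "(\<lambda>j. f (j + m)) sums (\<Sum>t\<le>u. real (m choose t) * x ^ m / x ^ u * (x ^ (u - t) * exp x / fact (u - t)))"
    unfolding f_shift by (intro sums_sum sums_mult sums_choose_exp_series)
  also have "(\<Sum>t\<le>u. real (m choose t) * x ^ m / x ^ u * (x ^ (u - t) * exp x / fact (u - t))) =
             exp x * (fps_of_poly ([:x, 1:] ^ m) * fps_exp 1) $ u"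
    unfolding fps_linear_power_exp_nth sum_distrib_left
  proof (intro sum.cong refl)
    fix t
    assume "t \<in> {..u}"
    then show "real (m choose t) * x ^ m / x ^ u * (x ^ (u - t) * exp x / fact (u - t)) =
               exp x * (real (m choose t) * x ^ (m - t) / fact (u - t))"
      using \<open>x \<noteq> 0\<close> by (cases "t \<le> m") (simp_all add: power_diff binomial_eq_0)
  qed
  finally have "(\<lambda>j. f (j + m)) sums (exp x * (fps_of_poly ([:x, 1:] ^ m) * fps_exp 1) $ u)" .
  moreover have "f k = 0" if "k < m" for k
    using that by (simp add: f_def poly_falling_poly_of_nat)
  ultimately show ?thesis
    using sums_zero_iff_shift[of m f] unfolding f_def by simp
qed

lemma fps_const_prod: "fps_const (\<Prod>x\<in>A. f x) = (\<Prod>x\<in>A. fps_const (f x) :: real fps)"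
  by (induction A rule: infinite_finite_induct) (simp_all flip: fps_const_mult)

text \<open>The pieces of \<open>charlier_formula\<close>: \<open>charlier_const\<close> is the prefactor, \<open>charlier_coeff\<close> the
  coefficient of the summand indexed by \<open>\<ell>\<close>, and \<open>binomial_basis a\<^sub>i \<ell>\<^sub>i\<close> its polynomial factor
  \<open>(-x)\<^sub>\<ell>\<^sub>i (-1/a\<^sub>i)\<^bsup>\<ell>\<^sub>i\<^esup>/\<ell>\<^sub>i!\<close>, which equals \<open>binom(k, \<ell>\<^sub>i) / a\<^sub>i\<^bsup>\<ell>\<^sub>i\<^esup>\<close> at \<open>x = k\<close>.\<close>
definition charlier_denom :: "nat \<Rightarrow> (nat \<Rightarrow> real) \<Rightarrow> (nat \<Rightarrow> nat) \<Rightarrow> nat \<Rightarrow> real" where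
  "charlier_denom p a n i = (\<Prod>q\<in>{..<p} - {i}. (a i - a q) ^ n q)"

definition charlier_const :: "nat \<Rightarrow> (nat \<Rightarrow> real) \<Rightarrow> (nat \<Rightarrow> nat) \<Rightarrow> nat \<Rightarrow> real" where
  "charlier_const p a n i = (-1) ^ (n i - 1) * exp (- a i) / (fact (n i - 1) * charlier_denom p a n i)"

definition charlier_indices :: "nat \<Rightarrow> (nat \<Rightarrow> nat) \<Rightarrow> nat \<Rightarrow> (nat \<Rightarrow> nat) set" where
  "charlier_indices p n i = {l. (\<forall>q. p \<le> q \<longrightarrow> l q = 0) \<and> (\<Sum>q<p. l q) < n i}"

definition neg_binomial_coeff :: "(nat \<Rightarrow> real) \<Rightarrow> (nat \<Rightarrow> nat) \<Rightarrow> nat \<Rightarrow> nat \<Rightarrow> nat \<Rightarrow> real" where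
  "neg_binomial_coeff a n i q l = pochhammer (real (n q)) l / fact l * (1 / (a q - a i)) ^ l"

definition charlier_coeff :: "nat \<Rightarrow> (nat \<Rightarrow> real) \<Rightarrow> (nat \<Rightarrow> nat) \<Rightarrow> nat \<Rightarrow> (nat \<Rightarrow> nat) \<Rightarrow> real" where
  "charlier_coeff p a n i l =
     pochhammer (1 - real (n i)) (\<Sum>q<p. l q) * (\<Prod>q\<in>{..<p} - {i}. neg_binomial_coeff a n i q (l q))"

definition binomial_basis :: "real \<Rightarrow> nat \<Rightarrow> real poly" where
  "binomial_basis x u = smult ((-1 / x) ^ u / fact u) (\<Prod>t<u. [:of_nat t, -1:])"

definition charlier_poly :: "nat \<Rightarrow> (nat \<Rightarrow> real) \<Rightarrow> (nat \<Rightarrow> nat) \<Rightarrow> nat \<Rightarrow> real poly" where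
  "charlier_poly p a n i = smult (charlier_const p a n i)
     (\<Sum>l\<in>charlier_indices p n i. smult (charlier_coeff p a n i l) (binomial_basis (a i) (l i)))"

definition charlier_fps :: "nat \<Rightarrow> (nat \<Rightarrow> real) \<Rightarrow> (nat \<Rightarrow> nat) \<Rightarrow> nat \<Rightarrow> real fps" where
  "charlier_fps p a n i = (\<Prod>q\<in>{..<p} - {i}. Abs_fps (neg_binomial_coeff a n i q))"

lemma finite_charlier_indices: "finite (charlier_indices p n i)"
  by (rule finite_subset[OF _ finite_bounded_compositions[of p "n i"]]) (auto simp: charlier_indices_def)

lemma poly_binomial_basis: "poly (binomial_basis x u) y = pochhammer (- y) u * (-1 / x) ^ u / fact u"
  by (simp add: binomial_basis_def poly_prod pochhammer_prod atLeast0LessThan)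

lemma poly_binomial_basis_of_nat:
  assumes "x \<noteq> 0"
  shows "poly (binomial_basis x u) (real k) = real (k choose u) / x ^ u"
proof -
  have "real (k choose u) = (-1) ^ u * pochhammer (- real k) u / fact u"
    by (simp add: binomial_gbinomial gbinomial_pochhammer)
  moreover have "(-1 / x) ^ u = (-1) ^ u / x ^ u"
    by (rule power_divide)
  ultimately show ?thesis
    by (simp add: poly_binomial_basis mult_ac)
qed

lemma degree_binomial_basis: "degree (binomial_basis x u) \<le> u"
proof -
  have "degree (\<Prod>t<u. [:of_nat t, -1::real:]) \<le> (\<Sum>t<u. degree [:of_nat t, -1::real:])"
    using degree_prod_sum_le[of "{..<u}" "\<lambda>t. [:of_nat t, -1::real:]"] by (simp add: o_def)
  also have "\<dots> = u"
    by simp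
  finally show ?thesis
    unfolding binomial_basis_def using degree_smult_le order.trans by blast
qed

lemma poly_charlier_poly: "poly (charlier_poly p a n i) x = charlier_formula p a n i x"
  unfolding charlier_poly_def charlier_formula_def charlier_const_def charlier_denom_def
    charlier_indices_def charlier_coeff_def neg_binomial_coeff_def
  by (simp add: poly_sum poly_binomial_basis sum_distrib_left mult_ac)

lemma charlier_poly_zero: "n i = 0 \<Longrightarrow> charlier_poly p a n i = 0"
  by (simp add: charlier_poly_def charlier_indices_def)

lemma degree_below_charlier_poly: "degree_below (charlier_poly p a n i) (n i)"
proof (cases "n i = 0")
  case True
  then show ?thesis
    by (simp add: charlier_poly_zero degree_below_def)
next
  case False
  have "degree (smult (charlier_coeff p a n i l) (binomial_basis (a i) (l i))) \<le> n i - 1"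
    if l: "l \<in> charlier_indices p n i" for l
  proof -
    have "l i < n i"
    proof (cases "i < p")
      case True
      then have "l i \<le> (\<Sum>q<p. l q)"
        by (intro member_le_sum) auto
      with l show ?thesis
        by (simp add: charlier_indices_def)
    qed (use l in \<open>simp add: charlier_indices_def\<close>)
    then show ?thesis
      using degree_binomial_basis[of "a i" "l i"] degree_smult_le order.trans by fastforce
  qed
  then have "degree (\<Sum>l\<in>charlier_indices p n i. smult (charlier_coeff p a n i l) (binomial_basis (a i) (l i))) \<le>
             n i - 1"
    by (intro degree_sum_le finite_charlier_indices)
  then have "degree (charlier_poly p a n i) \<le> n i - 1"
    unfolding charlier_poly_def using degree_smult_le order.trans by blast
  with False show ?thesis
    by (auto simp: degree_below_iff)
qed

lemma sum_charlier_indices_by_total: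
  "(\<Sum>l\<in>charlier_indices p n i. pochhammer (1 - real (n i)) (\<Sum>q<p. l q) * G l) =
   (\<Sum>s<n i. pochhammer (1 - real (n i)) s * (\<Sum>l\<in>compositions p s. G l))"
proof -
  have "(\<Sum>l\<in>charlier_indices p n i. pochhammer (1 - real (n i)) (\<Sum>q<p. l q) * G l) =
        (\<Sum>s<n i. \<Sum>l\<in>{l \<in> charlier_indices p n i. (\<Sum>q<p. l q) = s}.
           pochhammer (1 - real (n i)) (\<Sum>q<p. l q) * G l)"
    by (rule sum.group[symmetric], rule finite_charlier_indices, simp, auto simp: charlier_indices_def)
  also have "\<dots> = (\<Sum>s<n i. \<Sum>l\<in>compositions p s. pochhammer (1 - real (n i)) s * G l)"
  proof (rule sum.cong)
    fix s
    assume "s \<in> {..<n i}"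
    then have "{l \<in> charlier_indices p n i. (\<Sum>q<p. l q) = s} = compositions p s"
      by (auto simp: charlier_indices_def compositions_def)
    then show "(\<Sum>l\<in>{l \<in> charlier_indices p n i. (\<Sum>q<p. l q) = s}. pochhammer (1 - real (n i)) (\<Sum>q<p. l q) * G l) =
               (\<Sum>l\<in>compositions p s. pochhammer (1 - real (n i)) s * G l)"
      by (auto simp: compositions_def intro: sum.cong)
  qed simp
  finally show ?thesis
    by (simp add: sum_distrib_left)
qed

text \<open>Grouping the summands by \<open>L = \<Sum> \<ell>\<^sub>q\<close> turns the multiple sum into a coefficient of a product
  of power series, and the weights \<open>(1 - n\<^sub>i)\<^sub>L\<close> amount to multiplying by \<open>e\<^sup>-\<^sup>X\<close>.\<close>
lemma sum_charlier_coeff_fps_nth: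
  assumes "i < p" "n i \<ge> 1"
  shows "(\<Sum>l\<in>charlier_indices p n i. charlier_coeff p a n i l * F $ l i) =
         (-1) ^ (n i - 1) * fact (n i - 1) * (fps_exp (-1) * F * charlier_fps p a n i) $ (n i - 1)"
proof -
  define f where "f q = (if q = i then fps_nth F else neg_binomial_coeff a n i q)" for q
  have f_split: "(\<Prod>q<p. g q (f q)) = g i (fps_nth F) * (\<Prod>q\<in>{..<p} - {i}. g q (neg_binomial_coeff a n i q))"
    for g :: "nat \<Rightarrow> (nat \<Rightarrow> real) \<Rightarrow> 'a::comm_monoid_mult"
  proof -
    have "(\<Prod>q<p. g q (f q)) = g i (f i) * (\<Prod>q\<in>{..<p} - {i}. g q (f q))"
      using assms(1) by (simp add: prod.remove)
    moreover have "(\<Prod>q\<in>{..<p} - {i}. g q (f q)) = (\<Prod>q\<in>{..<p} - {i}. g q (neg_binomial_coeff a n i q))"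
      by (rule prod.cong) (auto simp: f_def)
    moreover have "f i = fps_nth F"
      by (simp add: f_def)
    ultimately show ?thesis
      by simp
  qed
  have "(\<Sum>l\<in>charlier_indices p n i. charlier_coeff p a n i l * F $ l i) =
        (\<Sum>l\<in>charlier_indices p n i. pochhammer (1 - real (n i)) (\<Sum>q<p. l q) * (\<Prod>q<p. f q (l q)))"
    using f_split[of "\<lambda>q g. g (l q)" for l] by (simp add: charlier_coeff_def mult_ac)
  also have "\<dots> = (\<Sum>s<n i. pochhammer (1 - real (n i)) s * (\<Prod>q<p. Abs_fps (f q)) $ s)"
    by (rule trans[OF sum_charlier_indices_by_total]) (simp add: fps_prod_nth_compositions)
  also have "(\<Prod>q<p. Abs_fps (f q)) = F * charlier_fps p a n i"
    using f_split[of "\<lambda>_. Abs_fps"] by (simp add: charlier_fps_def fps_nth_inverse)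
  finally show ?thesis
    using assms(2) by (simp add: sum_pochhammer_one_minus_fps_nth mult.assoc)
qed

lemma sums_falling_moment_charlier_poly:
  assumes "a i \<noteq> 0"
  shows "(\<lambda>k. poly (falling_poly m) (real k) * poly (charlier_poly p a n i) (real k) * charlier_w a i k) sums
    (charlier_const p a n i * exp (a i) *
      (\<Sum>l\<in>charlier_indices p n i. charlier_coeff p a n i l * (fps_of_poly ([:a i, 1:] ^ m) * fps_exp 1) $ l i))"
proof -
  have "(\<lambda>k. \<Sum>l\<in>charlier_indices p n i. charlier_const p a n i * charlier_coeff p a n i l *
          (poly (falling_poly m) (real k) * (real (k choose l i) / a i ^ l i) * (a i ^ k / fact k))) sums
        (\<Sum>l\<in>charlier_indices p n i. charlier_const p a n i * charlier_coeff p a n i l *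
          (exp (a i) * (fps_of_poly ([:a i, 1:] ^ m) * fps_exp 1) $ l i))"
    using assms by (intro sums_sum sums_mult sums_falling_choose_exp_series)
  then show ?thesis
    using assms
    by (simp add: charlier_poly_def charlier_w_def poly_sum poly_binomial_basis_of_nat
        sum_distrib_left sum_distrib_right mult_ac)
qed

lemma suminf_falling_moment_charlier_poly:
  assumes "a i \<noteq> 0" "i < p" "n i \<ge> 1"
  shows "(\<Sum>k. poly (falling_poly m) (real k) * poly (charlier_poly p a n i) (real k) * charlier_w a i k) =
         (fps_of_poly ([:a i, 1:] ^ m) * charlier_fps p a n i) $ (n i - 1) / charlier_denom p a n i"
proof -
  let ?P = "fps_of_poly ([:a i, 1:] ^ m)"
  have "fps_exp (-1) * fps_exp 1 = (1 :: real fps)"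
    using fps_exp_add_mult[of "-1" "1::real"] by simp
  moreover have "fps_exp (-1) * (?P * fps_exp 1) * charlier_fps p a n i =
                 (fps_exp (-1) * fps_exp 1) * (?P * charlier_fps p a n i)"
    by (simp only: mult_ac)
  ultimately have exp_cancel:
    "fps_exp (-1) * (?P * fps_exp 1) * charlier_fps p a n i = ?P * charlier_fps p a n i"
    by simp
  have "(\<Sum>k. poly (falling_poly m) (real k) * poly (charlier_poly p a n i) (real k) * charlier_w a i k) =
        charlier_const p a n i * exp (a i) *
          (\<Sum>l\<in>charlier_indices p n i. charlier_coeff p a n i l * (?P * fps_exp 1) $ l i)"
    using sums_falling_moment_charlier_poly[where a = a and i = i, OF assms(1)] by (simp add: sums_iff)
  also have "\<dots> = charlier_const p a n i * exp (a i) *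
      ((-1) ^ (n i - 1) * fact (n i - 1) * (?P * charlier_fps p a n i) $ (n i - 1))"
    by (simp only: sum_charlier_coeff_fps_nth[where p = p and n = n and i = i, OF assms(2,3)] exp_cancel)
  also have "\<dots> = (?P * charlier_fps p a n i) $ (n i - 1) / charlier_denom p a n i"
  proof -
    have "(-1 :: real) ^ (n i - 1) * (-1) ^ (n i - 1) = 1"
      by (simp flip: power_mult_distrib)
    then show ?thesis
      by (simp add: charlier_const_def exp_minus field_simps)
  qed
  finally show ?thesis .
qed

lemma charlier_denom_nonzero:
  assumes "inj_on a {..<p}" "i < p"
  shows "charlier_denom p a n i \<noteq> 0"
  using assms by (auto simp: charlier_denom_def dest: inj_onD)

text \<open>Each factor of \<open>charlier_fps\<close> is the series of \<open>(1 - X / (a\<^sub>q - a\<^sub>i))\<^bsup>-n\<^sub>q\<^esup>\<close>.\<close>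
lemma charlier_fps_mult_linear_powers:
  assumes "inj_on a {..<p}" "i < p"
  shows "charlier_fps p a n i * fps_of_poly (\<Prod>q\<in>{..<p} - {i}. [:a i - a q, 1:] ^ n q) =
         fps_const (charlier_denom p a n i)"
proof -
  have "Abs_fps (neg_binomial_coeff a n i q) * (fps_const (a i - a q) + fps_X) ^ n q = fps_const ((a i - a q) ^ n q)"
    if "q \<in> {..<p} - {i}" for q
  proof -
    have "a q - a i \<noteq> 0"
      using assms that by (auto dest: inj_onD)
    then have "1 / (a q - a i) * (a i - a q) = -1"
      by (simp add: field_simps)
    then show ?thesis
      unfolding neg_binomial_coeff_def by (rule fps_neg_binomial_times_linear_power)
  qed
  then have "(\<Prod>q\<in>{..<p} - {i}. Abs_fps (neg_binomial_coeff a n i q) * (fps_const (a i - a q) + fps_X) ^ n q) =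
             (\<Prod>q\<in>{..<p} - {i}. fps_const ((a i - a q) ^ n q))"
    by (rule prod.cong[OF refl])
  then show ?thesis
    by (simp add: charlier_fps_def charlier_denom_def fps_of_poly_prod fps_of_poly_power fps_of_poly_pCons
        fps_const_prod flip: prod.distrib)
qed

text \<open>The moments against \<open>falling_poly m\<close> are the top coefficients of the truncations \<open>V\<^sub>i\<close> of the
  series \<open>(x + a\<^sub>i)\<^sup>m \<Prod>\<^sub>q\<^sub>\<noteq>\<^sub>i (x + a\<^sub>i - a\<^sub>q)\<^bsup>-n\<^sub>q\<^esup>\<close>, and these add up as in
  \<open>partial_fraction_top_coeff_sum\<close>.\<close>
lemma charlier_moment_falling_poly:
  assumes pos: "\<forall>q<p. a q > 0" and inj: "inj_on a {..<p}" and m: "m < (\<Sum>q<p. n q)"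
  shows "charlier_moment p a (charlier_poly p a n) (falling_poly m) = (if m = (\<Sum>q<p. n q) - 1 then 1 else 0)"
proof -
  define R where "R i = fps_const (1 / charlier_denom p a n i) * (fps_of_poly ([:a i, 1:] ^ m) * charlier_fps p a n i)"
    for i
  define V where "V i = (\<Sum>t<n i. monom (R i $ t) t)" for i
  define E where "E i = (\<Prod>q\<in>{..<p} - {i}. [:a i - a q, 1:] ^ n q)" for i
  have coeff_V: "coeff (V i) j = (if j < n i then R i $ j else 0)" for i j
    unfolding V_def by (simp add: coeff_sum)
  have R_E: "R i * fps_of_poly (E i) = fps_of_poly ([:a i, 1:] ^ m)" if "i < p" for i
  proof -
    have "R i * fps_of_poly (E i) =
          fps_const (1 / charlier_denom p a n i) * fps_of_poly ([:a i, 1:] ^ m) * (charlier_fps p a n i * fps_of_poly (E i))"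
      by (simp only: R_def mult_ac)
    also have "\<dots> = fps_const (1 / charlier_denom p a n i) * fps_const (charlier_denom p a n i) * fps_of_poly ([:a i, 1:] ^ m)"
      by (simp only: E_def charlier_fps_mult_linear_powers[OF inj that] mult_ac)
    finally show ?thesis
      using charlier_denom_nonzero[OF inj that] by (simp flip: fps_const_mult)
  qed
  have "\<forall>i<p. \<forall>k<n i. coeff (V i * E i) k = coeff ([:a i, 1:] ^ m) k"
  proof (intro allI impI)
    fix i k
    assume "i < p" "k < n i"
    then have "coeff (V i * E i) k = (\<Sum>t\<le>k. R i $ t * fps_of_poly (E i) $ (k - t))"
      by (auto simp: coeff_mult coeff_V intro: sum.cong)
    also have "\<dots> = (R i * fps_of_poly (E i)) $ k"
      by (simp add: fps_mult_nth atLeast0AtMost)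
    also have "\<dots> = coeff ([:a i, 1:] ^ m) k"
      using R_E[OF \<open>i < p\<close>] by simp
    finally show "coeff (V i * E i) k = coeff ([:a i, 1:] ^ m) k" .
  qed
  then have "(\<Sum>i<p. if n i = 0 then 0 else coeff (V i) (n i - 1)) = (if m = (\<Sum>q<p. n q) - 1 then 1 else 0)"
    using partial_fraction_top_coeff_sum[OF inj m] by (simp add: degree_below_def coeff_V E_def)
  moreover have "(\<Sum>k. poly (falling_poly m) (real k) * poly (charlier_poly p a n i) (real k) * charlier_w a i k) =
                 (if n i = 0 then 0 else coeff (V i) (n i - 1))" if "i < p" for i
  proof (cases "n i = 0")
    case False
    moreover have "a i \<noteq> 0"
      using pos \<open>i < p\<close> by (simp add: less_imp_neq[symmetric])
    ultimately show ?thesis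
      using suminf_falling_moment_charlier_poly[of a i p n m] \<open>i < p\<close> by (simp add: coeff_V R_def)
  qed (simp add: charlier_poly_zero)
  ultimately show ?thesis
    unfolding charlier_moment_def by simp
qed

text \<open>\<open>falling_poly j\<close> is monic of degree \<open>j\<close>, so the moments of the monomials follow from those of
  the falling factorials by induction on \<open>j\<close>.\<close>
lemma charlier_moment_monom_if_falling:
  assumes falling: "\<And>m. m < N \<Longrightarrow> charlier_moment p a C (falling_poly m) = (if m = N - 1 then 1 else 0)"
    and "j < N"
  shows "charlier_moment p a C (monom 1 j) = (if j = N - 1 then 1 else 0)"
  using \<open>j < N\<close>
proof (induction j rule: less_induct)
  case (less j)
  have "charlier_moment p a C (falling_poly j) =
        (\<Sum>t<j. coeff (falling_poly j) t * charlier_moment p a C (monom 1 t)) + charlier_moment p a C (monom 1 j)"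
    using charlier_moment_expand[of p a C "falling_poly j"] lead_coeff_falling_poly[of j]
    by (simp add: degree_falling_poly lessThan_Suc_atMost[symmetric])
  also have "(\<Sum>t<j. coeff (falling_poly j) t * charlier_moment p a C (monom 1 t)) = 0"
    using less by (intro sum.neutral) auto
  finally show ?case
    using falling less.prems by simp
qed

lemma is_typeI_charlier_iff:
  "is_typeI_charlier p a n C \<longleftrightarrow>
     (\<forall>i<p. degree_below (C i) (n i)) \<and>
     (\<forall>j<(\<Sum>q<p. n q). charlier_moment p a C (monom 1 j) = (if j = (\<Sum>q<p. n q) - 1 then 1 else 0))"
proof -
  have degrees: "(\<forall>i<p. (n i = 0 \<longrightarrow> C i = 0) \<and> (n i \<ge> 1 \<longrightarrow> degree (C i) \<le> n i - 1)) \<longleftrightarrow>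
        (\<forall>i<p. degree_below (C i) (n i))"
    by (auto simp: degree_below_iff)
  have moments: "(\<forall>j. j + 2 \<le> N \<longrightarrow> f j = 0) \<and> (\<forall>j. j + 1 = N \<longrightarrow> f j = 1) \<longleftrightarrow>
                 (\<forall>j<N. f j = (if j = N - 1 then 1 else 0))" for N and f :: "nat \<Rightarrow> real"
  proof (intro iffI conjI allI impI)
    fix j
    assume "(\<forall>j. j + 2 \<le> N \<longrightarrow> f j = 0) \<and> (\<forall>j. j + 1 = N \<longrightarrow> f j = 1)" "j < N"
    then show "f j = (if j = N - 1 then 1 else 0)"
      by (cases "j = N - 1") auto
  next
    fix j
    assume "\<forall>j<N. f j = (if j = N - 1 then 1 else 0)"
    then show "j + 2 \<le> N \<Longrightarrow> f j = 0" and "j + 1 = N \<Longrightarrow> f j = 1"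
      by auto
  qed
  show ?thesis
    unfolding is_typeI_charlier_def charlier_moment_monom degrees
      moments[of "\<Sum>q<p. n q" "\<lambda>j. charlier_moment p a C (monom 1 j)"] ..
qed

lemma is_typeI_charlier_charlier_poly:
  assumes "\<forall>q<p. a q > 0" and "inj_on a {..<p}"
  shows "is_typeI_charlier p a n (charlier_poly p a n)"
  unfolding is_typeI_charlier_iff
proof (intro conjI allI impI)
  show "degree_below (charlier_poly p a n i) (n i)" for i
    by (rule degree_below_charlier_poly)
  show "charlier_moment p a (charlier_poly p a n) (monom 1 j) = (if j = (\<Sum>q<p. n q) - 1 then 1 else 0)"
    if "j < (\<Sum>q<p. n q)" for j
    by (rule charlier_moment_monom_if_falling[OF charlier_moment_falling_poly[OF assms] that])
qed

lemma degree_below_diff: "degree_below C m \<Longrightarrow> degree_below C' m \<Longrightarrow> degree_below (C - C') m"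
  by (simp add: degree_below_def)

lemma is_typeI_charlier_unique:
  assumes pos: "\<forall>q<p. a q > 0" and inj: "inj_on a {..<p}"
    and C: "is_typeI_charlier p a n C" and C': "is_typeI_charlier p a n C'" and "i < p"
  shows "C i = C' i"
proof -
  have "charlier_moment p a (\<lambda>i. C i - C' i) \<pi> = 0" if "degree \<pi> < (\<Sum>q<p. n q)" for \<pi>
    using C C' that unfolding is_typeI_charlier_iff
    by (subst charlier_moment_expand) (simp add: charlier_moment_diff)
  moreover have "\<forall>i<p. degree_below (C i - C' i) (n i)"
    using C C' by (simp add: is_typeI_charlier_iff degree_below_diff)
  ultimately have "C i - C' i = 0"
    using charlier_moment_vanishing_imp_zero[OF pos inj _ _ \<open>i < p\<close>, of "\<lambda>i. C i - C' i"] by blast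
  then show ?thesis
    by simp
qed

theorem mainTheorem17:
  fixes p :: nat and a :: "nat \<Rightarrow> real" and n :: "nat \<Rightarrow> nat"
  assumes "\<forall>q<p. a q > 0"
    and "inj_on a {..<p}"
  shows "(\<exists>C. is_typeI_charlier p a n C) \<and>
         (\<forall>C. is_typeI_charlier p a n C \<longrightarrow>
            (\<forall>i<p. n i \<ge> 1 \<longrightarrow> (\<forall>x. poly (C i) x = charlier_formula p a n i x)))"
proof (intro conjI allI impI exI)
  show "is_typeI_charlier p a n (charlier_poly p a n)"
    using assms by (rule is_typeI_charlier_charlier_poly)
  fix C i x
  assume "is_typeI_charlier p a n C" "i < p"
  then have "C i = charlier_poly p a n i"
    using assms is_typeI_charlier_charlier_poly is_typeI_charlier_unique by blast
  then show "poly (C i) x = charlier_formula p a n i x"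
    by (simp add: poly_charlier_poly)
qed

end
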